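(* A Hausdorff space $(X,\mathcal T)$ is very I-favorable if and only if the family $\{\mathcal P\in[\mathcal T]^{\le\omega}:\mathcal P\subset_!\mathcal T\}$ contains a club $\mathcal C$ with the following properties: (i) every $A\in\mathcal C$ covers $X$ and is closed under finite intersections; (ii) for any two distinct points $x,y\in X$ there exist $A\in\mathcal C$ and disjoint $U_x,U_y\in A$ with $x\in U_x$ and $y\in U_y$; (iii) $\bigcup\mathcal C=\mathcal T$.
   Context: For a family $\mathcal P$ of open subsets of $X$ contained in a family $\mathcal Q$ of open subsets of $X$, write $\mathcal P\subset_!\mathcal Q$ if for every subfamily $\mathcal S\subset\mathcal P$ and every point $x\notin\operatorname{cl}_X\bigcup\mathcal S$ there exists $W\in\mathcal P$ with $x\in W$ and $W\cap\bigcup\mathcal S=\emptyset$. $[\mathcal Q]^{\le\omega}$ denotes the set of all countable subfamilies of $\mathcal Q$. A family $\mathcal C\subset[\mathcal Q]^{\le\omega}$ is a club if (i) for every increasing sequence $C_1\subset C_2\subset\cdots$ of members of $\mathcal C$, $\bigcup_nC_n\in\mathcal C$, and (ii) every $B\in[\mathcal Q]^{\le\omega}$ is contained in some $C\in\mathcal C$. A space $X$ with topology $\mathcal T_X$ is very I-favorable if the family $\{\mathcal P\in[\mathcal T_X]^{\le\omega}:\mathcal P\subset_!\mathcal T_X\}$ contains a club. *)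

theory Defs
  imports "HOL-Analysis.Analysis"
begin

definition opens :: "'a topology \<Rightarrow> 'a set set" where
  "opens X = {U. openin X U}"

definition subset_bang :: "'a topology \<Rightarrow> 'a set set \<Rightarrow> 'a set set \<Rightarrow> bool" where
  "subset_bang X P Q \<longleftrightarrow> P \<subseteq> Q \<and>
     (\<forall>S. S \<subseteq> P \<longrightarrow> (\<forall>x \<in> topspace X. x \<notin> X closure_of (\<Union>S) \<longrightarrow>
        (\<exists>W\<in>P. x \<in> W \<and> W \<inter> \<Union>S = {})))"

definition countable_subfams :: "'b set \<Rightarrow> 'b set set" where
  "countable_subfams Q = {B. B \<subseteq> Q \<and> countable B}"

definition club :: "'b set \<Rightarrow> 'b set set \<Rightarrow> bool" where
  "club Q C \<longleftrightarrow> C \<subseteq> countable_subfams Q \<and>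
     (\<forall>c :: nat \<Rightarrow> 'b set. (\<forall>n. c n \<in> C) \<and> (\<forall>n. c n \<subseteq> c (Suc n)) \<longrightarrow> (\<Union>n. c n) \<in> C) \<and>
     (\<forall>B \<in> countable_subfams Q. \<exists>A \<in> C. B \<subseteq> A)"

definition very_I_favorable :: "'a topology \<Rightarrow> bool" where
  "very_I_favorable X \<longleftrightarrow>
     (\<exists>C. club (opens X) C \<and>
          C \<subseteq> {P \<in> countable_subfams (opens X). subset_bang X P (opens X)})"

end

theory Submission
  imports Defs
begin

(* The implication from right to left is immediate, since the
   required club is in particular a witness for very I-favorability.  For the
   converse, let C0 be a club of families P with P \<subset>_! T.  We intersect C0 with
   the club D of countable open families that contain the whole space and are
   closed under binary intersections.  Intersections of two clubs are clubs
   (alternate between them along an increasing chain), so C = C0 \<inter> D is a club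
   inside C0, and its members cover X and are closed under intersections.
   Cofinality of C then does the rest: a pair of disjoint open neighbourhoods of
   two distinct points (Hausdorff) lies in some member of C, and every single
   open set lies in some member, whence \<Union>C = T. *)

definition inter_closed :: "'b set set \<Rightarrow> bool" where
  "inter_closed A \<longleftrightarrow> (\<forall>U\<in>A. \<forall>V\<in>A. U \<inter> V \<in> A)"

lemma club_subfams: "club Q C \<Longrightarrow> A \<in> C \<Longrightarrow> A \<subseteq> Q \<and> countable A"
  unfolding club_def countable_subfams_def by auto

lemma club_chain:
  assumes "club Q C" "\<And>n. c n \<in> C" "\<And>n. c n \<subseteq> c (Suc n)"
  shows "(\<Union>n. c n) \<in> C"
  using assms unfolding club_def by simp

lemma club_cofinal:
  assumes "club Q C" "B \<subseteq> Q" "countable B"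
  shows "\<exists>A\<in>C. B \<subseteq> A"
  using assms unfolding club_def countable_subfams_def by simp

(* A club on Q exhausts Q: every singleton is a countable subfamily. *)
lemma club_Union:
  assumes "club Q C"
  shows "\<Union>C = Q"
proof
  show "\<Union>C \<subseteq> Q" using club_subfams[OF assms] by blast
  show "Q \<subseteq> \<Union>C"
  proof
    fix q assume "q \<in> Q"
    then obtain A where "A \<in> C" "{q} \<subseteq> A" using club_cofinal[OF assms, of "{q}"] by auto
    then show "q \<in> \<Union>C" by blast
  qed
qed

(* Cofinality of C1 \<inter> C2: starting from B, alternately enlarge into C2 and C1;
   the union of the resulting chain is a union of a chain in C1 and equally of
   an interleaved chain in C2. *)
lemma club_Int_cofinal:
  assumes c1: "club Q C1" and c2: "club Q C2" and B: "B \<subseteq> Q" "countable B"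
  shows "\<exists>A \<in> C1 \<inter> C2. B \<subseteq> A"
proof -
  have "\<forall>B'. B' \<subseteq> Q \<and> countable B' \<longrightarrow> (\<exists>A. A \<in> C1 \<and> B' \<subseteq> A)"
    using club_cofinal[OF c1] by blast
  then obtain f where f: "\<And>B'. B' \<subseteq> Q \<Longrightarrow> countable B' \<Longrightarrow> f B' \<in> C1 \<and> B' \<subseteq> f B'"
    by metis
  have "\<forall>B'. B' \<subseteq> Q \<and> countable B' \<longrightarrow> (\<exists>A. A \<in> C2 \<and> B' \<subseteq> A)"
    using club_cofinal[OF c2] by blast
  then obtain g where g: "\<And>B'. B' \<subseteq> Q \<Longrightarrow> countable B' \<Longrightarrow> g B' \<in> C2 \<and> B' \<subseteq> g B'"
    by metis
  define a where "a = rec_nat (f B) (\<lambda>_ A. f (g A))"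
  have a0: "a 0 = f B" and aS: "\<And>n. a (Suc n) = f (g (a n))" by (simp_all add: a_def)
  have aC: "a n \<in> C1" for n
  proof (induction n)
    case 0 then show ?case using f B a0 by simp
  next
    case (Suc n)
    then have "g (a n) \<in> C2" using g club_subfams[OF c1] by blast
    then show ?case using aS f club_subfams[OF c2] by auto
  qed
  have gC: "g (a n) \<in> C2 \<and> a n \<subseteq> g (a n)" for n using aC club_subfams[OF c1] g by blast
  have ga: "g (a n) \<subseteq> a (Suc n)" for n unfolding aS using gC f club_subfams[OF c2] by blast
  have "(\<Union>n. a n) \<in> C1"
    using club_chain[OF c1, of a] aC gC ga by (meson order_trans)
  moreover have "(\<Union>n. g (a n)) \<in> C2"
    using club_chain[OF c2, of "\<lambda>n. g (a n)"] gC ga by (meson order_trans)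
  moreover have "(\<Union>n. a n) = (\<Union>n. g (a n))" using gC ga by blast
  moreover have "B \<subseteq> (\<Union>n. a n)" using f B a0 by blast
  ultimately show ?thesis by auto
qed

lemma club_Int:
  assumes "club Q C1" "club Q C2"
  shows "club Q (C1 \<inter> C2)"
  unfolding club_def
proof (intro conjI allI impI ballI)
  show "C1 \<inter> C2 \<subseteq> countable_subfams Q"
    using club_subfams[OF assms(1)] by (auto simp: countable_subfams_def)
next
  fix c :: "nat \<Rightarrow> _" assume "(\<forall>n. c n \<in> C1 \<inter> C2) \<and> (\<forall>n. c n \<subseteq> c (Suc n))"
  then show "(\<Union>n. c n) \<in> C1 \<inter> C2" using club_chain[OF assms(1)] club_chain[OF assms(2)] by simp
next
  fix B assume "B \<in> countable_subfams Q"
  then show "\<exists>A \<in> C1 \<inter> C2. B \<subseteq> A" using club_Int_cofinal[OF assms] by (simp add: countable_subfams_def)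
qed

(* Inter-closedness survives unions of increasing chains: two members of the
   union already lie in a common member of the chain. *)
lemma inter_closed_chain_Union:
  assumes "\<And>n. inter_closed (c n)" "\<And>n. c n \<subseteq> c (Suc n)"
  shows "inter_closed (\<Union>n. c n)"
  unfolding inter_closed_def
proof (intro ballI)
  fix U V assume "U \<in> (\<Union>n. c n)" "V \<in> (\<Union>n. c n)"
  then obtain n m where "U \<in> c n" "V \<in> c m" by blast
  moreover have "c n \<subseteq> c (max n m)" "c m \<subseteq> c (max n m)"
    using lift_Suc_mono_le[of c] assms(2) by auto
  ultimately have "U \<in> c (max n m)" "V \<in> c (max n m)" by blast+
  then show "U \<inter> V \<in> (\<Union>n. c n)" using assms(1) unfolding inter_closed_def by blast
qed

lemma finite_intersections_hull:
  assumes B: "B \<subseteq> opens X" "countable B"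
  defines "A \<equiv> {topspace X \<inter> \<Inter>F | F. finite F \<and> F \<subseteq> B}"
  shows "countable A" "A \<subseteq> opens X" "topspace X \<in> A" "inter_closed A" "B \<subseteq> A"
proof -
  have "countable {F. finite F \<and> F \<subseteq> B}" using B countable_Collect_finite_subset by auto
  then show "countable A" unfolding A_def by (simp add: setcompr_eq_image)
  show "A \<subseteq> opens X"
  proof
    fix W assume "W \<in> A"
    then obtain F where F: "finite F" "F \<subseteq> B" "W = topspace X \<inter> \<Inter>F" unfolding A_def by blast
    have "openin X (topspace X \<inter> \<Inter>F)"
    proof (cases "F = {}")
      case False
      then have "openin X (\<Inter>F)" using F B by (intro openin_Inter) (auto simp: opens_def)
      then show ?thesis by (simp add: openin_Int)
    qed simp
    then show "W \<in> opens X" using F opens_def by auto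
  qed
  show "topspace X \<in> A" unfolding A_def by (rule CollectI, rule exI[of _ "{}"]) auto
  show "inter_closed A" unfolding inter_closed_def
  proof (intro ballI)
    fix U V assume "U \<in> A" "V \<in> A"
    then obtain F G where "finite F" "F \<subseteq> B" "U = topspace X \<inter> \<Inter>F"
        "finite G" "G \<subseteq> B" "V = topspace X \<inter> \<Inter>G" unfolding A_def by blast
    then show "U \<inter> V \<in> A" unfolding A_def by (intro CollectI exI[of _ "F \<union> G"]) auto
  qed
  show "B \<subseteq> A"
  proof
    fix U assume "U \<in> B"
    moreover have "U \<subseteq> topspace X" using \<open>U \<in> B\<close> B openin_subset by (auto simp: opens_def)
    ultimately show "U \<in> A" unfolding A_def by (intro CollectI exI[of _ "{U}"]) auto
  qed
qed

lemma club_inter_closed: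
  "club (opens X) {A \<in> countable_subfams (opens X). topspace X \<in> A \<and> inter_closed A}"
  unfolding club_def
proof (intro conjI allI impI ballI)
  fix c :: "nat \<Rightarrow> _"
  assume "(\<forall>n. c n \<in> {A \<in> countable_subfams (opens X). topspace X \<in> A \<and> inter_closed A})
          \<and> (\<forall>n. c n \<subseteq> c (Suc n))"
  then show "(\<Union>n. c n) \<in> {A \<in> countable_subfams (opens X). topspace X \<in> A \<and> inter_closed A}"
    using inter_closed_chain_Union[of c] by (auto simp: countable_subfams_def)
next
  fix B assume "B \<in> countable_subfams (opens X)"
  then show "\<exists>A\<in>{A \<in> countable_subfams (opens X). topspace X \<in> A \<and> inter_closed A}. B \<subseteq> A"
    using finite_intersections_hull[of B X] by (auto simp: countable_subfams_def)
qed auto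

lemma club_separates_points:
  assumes "Hausdorff_space X" "club (opens X) C"
    and "x \<in> topspace X" "y \<in> topspace X" "x \<noteq> y"
  shows "\<exists>A\<in>C. \<exists>Ux\<in>A. \<exists>Uy\<in>A. Ux \<inter> Uy = {} \<and> x \<in> Ux \<and> y \<in> Uy"
proof -
  obtain U V where UV: "openin X U" "openin X V" "x \<in> U" "y \<in> V" "disjnt U V"
    using assms unfolding Hausdorff_space_def by blast
  have "{U, V} \<subseteq> opens X" using UV by (simp add: opens_def)
  then obtain A where "A \<in> C" "U \<in> A" "V \<in> A"
    using club_cofinal[OF assms(2), of "{U, V}"] by auto
  moreover have "U \<inter> V = {}" using UV(5) by (simp add: disjnt_def)
  ultimately show ?thesis using UV(3,4) by blast
qed

lemma Union_opens_cover:
  "A \<subseteq> opens X \<Longrightarrow> topspace X \<in> A \<Longrightarrow> \<Union>A = topspace X"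
  using openin_subset unfolding opens_def by auto

theorem corollary2p6:
  fixes X :: "'a topology"
  assumes "Hausdorff_space X"
  shows "very_I_favorable X \<longleftrightarrow>
    (\<exists>C. club (opens X) C \<and>
         C \<subseteq> {P \<in> countable_subfams (opens X). subset_bang X P (opens X)} \<and>
         (\<forall>A\<in>C. \<Union>A = topspace X \<and> (\<forall>U\<in>A. \<forall>V\<in>A. U \<inter> V \<in> A)) \<and>
         (\<forall>x\<in>topspace X. \<forall>y\<in>topspace X. x \<noteq> y \<longrightarrow>
            (\<exists>A\<in>C. \<exists>Ux\<in>A. \<exists>Uy\<in>A. Ux \<inter> Uy = {} \<and> x \<in> Ux \<and> y \<in> Uy)) \<and>
         \<Union>C = opens X)"
    (is "_ \<longleftrightarrow> (\<exists>C. ?good C)")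
proof
  assume "very_I_favorable X"
  then obtain C0 where C0: "club (opens X) C0"
    "C0 \<subseteq> {P \<in> countable_subfams (opens X). subset_bang X P (opens X)}"
    unfolding very_I_favorable_def by blast
  define C where
    "C = C0 \<inter> {A \<in> countable_subfams (opens X). topspace X \<in> A \<and> inter_closed A}"
  have club: "club (opens X) C"
    unfolding C_def using club_Int[OF C0(1) club_inter_closed] .
  have bang: "C \<subseteq> {P \<in> countable_subfams (opens X). subset_bang X P (opens X)}"
    using C0(2) unfolding C_def by blast
  have cover: "\<Union>A = topspace X \<and> (\<forall>U\<in>A. \<forall>V\<in>A. U \<inter> V \<in> A)" if "A \<in> C" for A
  proof -
    have "A \<subseteq> opens X" "topspace X \<in> A" "inter_closed A"
      using that unfolding C_def countable_subfams_def by simp_all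
    then show ?thesis using Union_opens_cover[of A X] unfolding inter_closed_def by simp
  qed
  show "\<exists>C. ?good C"
    using club bang cover club_separates_points[OF assms club] club_Union[OF club]
    by (intro exI[of _ C] conjI ballI impI) simp_all
next
  assume "\<exists>C. ?good C"
  then show "very_I_favorable X" unfolding very_I_favorable_def by (elim exE conjE) blast
qed

end
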